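(* For every Hermitian $a\in M_n$ we have $\tau(e^{a}\triangle a)\ge 0$, with equality if and only if $a\in\mathbb{C}1$.
   Context: Let $n\ge 2$, let $m\in\{1,\dots,n-1\}$ be relatively prime to $n$, and set $q=e^{2\pi i m/n}$. Let $M_n$ be the algebra of complex $n\times n$ matrices, with $1$ the identity matrix and $a^*$ the conjugate transpose. Let $u=\mathrm{diag}(1,q,\dots,q^{n-1})$ and let $v$ be the cyclic shift matrix with $v_{j,j+1}=1$ for $j=1,\dots,n-1$, $v_{n,1}=1$, other entries $0$. Let $x,y$ be any Hermitian matrices with $u=e^{\frac{2\pi i}{n}x}$ and $v=e^{\frac{2\pi i}{n}y}$. Define $\delta_1(a)=[y,a]$, $\delta_2(a)=-[x,a]$ and $\triangle=\delta_1^2+\delta_2^2$ on $M_n$. $\tau$ is the usual trace, and $e^a$ is the matrix exponential. *)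

theory Defs
  imports Complex_Main "HOL-Library.Complex_Order" "Jordan_Normal_Form.Matrix"
begin

definition cadj :: "complex mat \<Rightarrow> complex mat" where
  "cadj A = mat (dim_col A) (dim_row A) (\<lambda>(i,j). cnj (A $$ (j,i)))"

definition hermitian_mat :: "nat \<Rightarrow> complex mat \<Rightarrow> bool" where
  "hermitian_mat n A \<longleftrightarrow> A \<in> carrier_mat n n \<and> cadj A = A"

definition mexp :: "complex mat \<Rightarrow> complex mat" where
  "mexp A = mat (dim_row A) (dim_col A)
     (\<lambda>(i,j). (\<Sum>k. (A ^\<^sub>m k) $$ (i,j) / of_nat (fact k)))"

definition mtrace :: "complex mat \<Rightarrow> complex" where
  "mtrace A = (\<Sum>i<dim_row A. A $$ (i,i))"

definition comm :: "complex mat \<Rightarrow> complex mat \<Rightarrow> complex mat" where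
  "comm A B = A * B - B * A"

definition clock_mat :: "nat \<Rightarrow> nat \<Rightarrow> complex mat" where
  "clock_mat n m = mat n n (\<lambda>(i,j). if i = j then cis (2 * pi * real m / real n) ^ i else 0)"

definition shift_mat :: "nat \<Rightarrow> complex mat" where
  "shift_mat n = mat n n (\<lambda>(i,j). if j = (i + 1) mod n then 1 else 0)"

definition delta1 :: "complex mat \<Rightarrow> complex mat \<Rightarrow> complex mat" where
  "delta1 y a = comm y a"

definition delta2 :: "complex mat \<Rightarrow> complex mat \<Rightarrow> complex mat" where
  "delta2 x a = - comm x a"

definition laplacian :: "complex mat \<Rightarrow> complex mat \<Rightarrow> complex mat \<Rightarrow> complex mat" where
  "laplacian x y a = delta1 y (delta1 y a) + delta2 x (delta2 x a)"

end

theory Submission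
  imports Defs "Jordan_Normal_Form.Schur_Decomposition" "Jordan_Normal_Form.Spectral_Radius"
begin

(* Diagonalise a = U diag(d) U^* unitarily. The Laplacian is [y,[y,a]] + [x,[x,a]], and for a
   Hermitian h with h' = U^* h U one computes
     tau(e^a [h,[h,a]]) = sum_{i,j} |h'_ij|^2 (e^(d_i) - e^(d_j)) (d_i - d_j),
   where every summand is nonnegative because exp is increasing. Hence the trace vanishes only if
   h'_ij = 0 whenever d_i ~= d_j, i.e. only if a commutes with x and y, and then also with
   u = e^(2 pi i x / n) and v = e^(2 pi i y / n). As m is coprime to n, the diagonal entries q^i of
   u are pairwise distinct, so a is diagonal; commuting with the cyclic shift v makes its diagonal
   constant. *)

lemma dim_cadj [simp]: "dim_row (cadj A) = dim_col A" "dim_col (cadj A) = dim_row A"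
  by (simp_all add: cadj_def)

lemma index_cadj [simp]: "i < dim_col A \<Longrightarrow> j < dim_row A \<Longrightarrow> cadj A $$ (i, j) = cnj (A $$ (j, i))"
  by (simp add: cadj_def)

lemma cadj_carrier [simp]: "A \<in> carrier_mat n m \<Longrightarrow> cadj A \<in> carrier_mat m n"
  by (auto simp: cadj_def)

lemma cadj_cadj [simp]: "cadj (cadj A) = A"
  by (rule eq_matI) simp_all

lemma cadj_mult: "A \<in> carrier_mat n k \<Longrightarrow> B \<in> carrier_mat k m \<Longrightarrow> cadj (A * B) = cadj B * cadj A"
  by (rule eq_matI) (auto simp: scalar_prod_def cnj_sum mult.commute intro!: sum.cong)

lemma hermitian_mat_cnj_index:
  "hermitian_mat n H \<Longrightarrow> i < n \<Longrightarrow> j < n \<Longrightarrow> H $$ (j, i) = cnj (H $$ (i, j))"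
  unfolding hermitian_mat_def by (metis carrier_matD index_cadj)

lemma hermitian_mat_cadj_mult_mult:
  assumes H: "hermitian_mat n H" and A: "A \<in> carrier_mat n k"
  shows "hermitian_mat k (cadj A * H * A)"
proof -
  have Hc: "H \<in> carrier_mat n n" "cadj H = H" using H by (auto simp: hermitian_mat_def)
  have "cadj (cadj A * H * A) = cadj A * cadj (cadj A * H)"
    by (rule cadj_mult[of _ k n]) (use A Hc in auto)
  also have "cadj (cadj A * H) = H * A"
    using cadj_mult[of "cadj A" k n H n] A Hc by simp
  also have "cadj A * (H * A) = cadj A * H * A"
    using A Hc by (simp add: assoc_mult_mat[of _ k n _ n _ k])
  finally show ?thesis using A Hc by (auto simp: hermitian_mat_def intro!: mult_carrier_mat)
qed

definition unitary_mat :: "nat \<Rightarrow> complex mat \<Rightarrow> bool" where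
  "unitary_mat n U \<longleftrightarrow> U \<in> carrier_mat n n \<and> cadj U * U = 1\<^sub>m n \<and> U * cadj U = 1\<^sub>m n"

lemma unitary_matI:
  assumes "U \<in> carrier_mat n n" and "cadj U * U = 1\<^sub>m n"
  shows "unitary_mat n U"
  using assms mat_mult_left_right_inverse[of "cadj U" n U] by (simp add: unitary_mat_def)

lemma unitary_mat_mult:
  assumes U: "unitary_mat n U" and V: "unitary_mat n V"
  shows "unitary_mat n (U * V)"
proof (rule unitary_matI)
  have Uc: "U \<in> carrier_mat n n" "cadj U * U = 1\<^sub>m n" and Vc: "V \<in> carrier_mat n n" "cadj V * V = 1\<^sub>m n"
    using U V by (auto simp: unitary_mat_def)
  show "U * V \<in> carrier_mat n n" using Uc Vc by simp
  have "cadj (U * V) * (U * V) = cadj V * (cadj U * (U * V))"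
    using Uc Vc by (simp add: cadj_mult assoc_mult_mat[of _ n n _ n _ n])
  also have "cadj U * (U * V) = V"
    using assoc_mult_mat[of "cadj U" n n U n V n] Uc Vc by simp
  finally show "cadj (U * V) * (U * V) = 1\<^sub>m n" using Vc by simp
qed

lemma unitary_mat_of_cols:
  assumes ws: "set ws \<subseteq> carrier_vec n" "length ws = n"
    and orthonormal: "\<And>i j. i < n \<Longrightarrow> j < n \<Longrightarrow> ws ! j \<bullet>c ws ! i = (if i = j then 1 else 0)"
  shows "unitary_mat n (mat_of_cols n ws)"
proof (rule unitary_matI)
  let ?W = "mat_of_cols n ws"
  show W: "?W \<in> carrier_mat n n" using mat_of_cols_carrier(1)[of n ws] ws(2) by simp
  show "cadj ?W * ?W = 1\<^sub>m n"
  proof (rule eq_matI)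
    fix i j assume "i < dim_row (1\<^sub>m n)" "j < dim_col (1\<^sub>m n)"
    then have ij: "i < n" "j < n" by auto
    then have "ws ! i \<in> carrier_vec n" "ws ! j \<in> carrier_vec n" using ws by auto
    then have "(cadj ?W * ?W) $$ (i, j) = ws ! j \<bullet>c ws ! i"
      using ij ws W by (auto simp: scalar_prod_def mat_of_cols_index mult.commute intro!: sum.cong)
    then show "(cadj ?W * ?W) $$ (i, j) = 1\<^sub>m n $$ (i, j)" using ij orthonormal by simp
  qed (use W in auto)
qed

definition vec_normalize :: "complex vec \<Rightarrow> complex vec" where
  "vec_normalize w = complex_of_real (1 / sqrt (cmod (w \<bullet>c w))) \<cdot>\<^sub>v w"

lemma vec_normalize_cscalar_prod:
  assumes "dim_vec v = dim_vec w"
  shows "vec_normalize v \<bullet>c vec_normalize w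
    = complex_of_real (1 / sqrt (cmod (v \<bullet>c v)) * (1 / sqrt (cmod (w \<bullet>c w)))) * (v \<bullet>c w)"
  using assms by (simp add: vec_normalize_def conjugate_smult_vec mult_ac)

lemma vec_normalize_cscalar_prod_self:
  assumes "w \<in> carrier_vec n" "w \<noteq> 0\<^sub>v n"
  shows "vec_normalize w \<bullet>c vec_normalize w = 1"
proof -
  define c where "c = Re (w \<bullet>c w)"
  have "w \<bullet>c w > 0" using assms by simp
  then have c: "0 < c" "w \<bullet>c w = complex_of_real c"
    by (auto simp: c_def less_complex_def complex_eq_iff)
  have "1 / sqrt c * (1 / sqrt c) * c = 1" using c(1) by (simp add: field_simps)
  then show ?thesis using c by (simp add: vec_normalize_cscalar_prod)
qed

lemma unitary_completion:
  fixes v :: "complex vec"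
  assumes v: "v \<in> carrier_vec n" "v \<noteq> 0\<^sub>v n"
  obtains W s where "unitary_mat n W" "col W 0 = s \<cdot>\<^sub>v v"
proof -
  interpret cof_vec_space n "TYPE(complex)" .
  define ws where "ws = gram_schmidt n (basis_completion v)"
  note bc = basis_completion[OF v]
  have ws: "corthogonal ws" "set ws \<subseteq> carrier_vec n" "length ws = n"
    using gram_schmidt_result[OF bc(2,4,5) ws_def] bc(6) by auto
  have n: "0 < n" using v by (cases n) auto
  have ws0: "ws ! 0 = v"
  proof -
    obtain vs where "basis_completion v = v # vs" using bc(6,7) n by (cases "basis_completion v") auto
    then have "hd ws = v" using v by (simp add: ws_def)
    then show ?thesis using ws(3) n by (cases ws) auto
  qed
  define us where "us = map vec_normalize ws"
  have us: "set us \<subseteq> carrier_vec n" "length us = n" using ws by (auto simp: us_def vec_normalize_def)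
  have "unitary_mat n (mat_of_cols n us)"
  proof (rule unitary_mat_of_cols[OF us])
    fix i j assume ij: "i < n" "j < n"
    then have ws_ij: "ws ! i \<in> carrier_vec n" "ws ! j \<in> carrier_vec n" using ws by auto
    show "us ! j \<bullet>c us ! i = (if i = j then 1 else 0)"
    proof (cases "i = j")
      case True
      have "ws ! i \<bullet>c ws ! i \<noteq> 0" using corthogonalD[OF ws(1)] ij ws(3) by auto
      then have "ws ! i \<noteq> 0\<^sub>v n" by auto
      then show ?thesis using True ij ws(3) vec_normalize_cscalar_prod_self[OF ws_ij(1)] by (simp add: us_def)
    next
      case False
      then show ?thesis using corthogonalD[OF ws(1)] ij ws(3) ws_ij by (simp add: us_def vec_normalize_cscalar_prod)
    qed
  qed
  moreover have "col (mat_of_cols n us) 0 = complex_of_real (1 / sqrt (cmod (v \<bullet>c v))) \<cdot>\<^sub>v v"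
    using us n ws0 v(1) by (subst col_mat_of_cols) (auto simp: us_def vec_normalize_def)
  ultimately show ?thesis using that by blast
qed

lemma unitary_mat_conj_cancel:
  assumes W: "unitary_mat n W" and A: "A \<in> carrier_mat n n"
  shows "W * (cadj W * A * W) * cadj W = A"
proof -
  have Wc: "W \<in> carrier_mat n n" "W * cadj W = 1\<^sub>m n" using W by (auto simp: unitary_mat_def)
  have "W * (cadj W * A * W) * cadj W = (W * cadj W) * A * (W * cadj W)"
    using Wc(1) A by (simp add: assoc_mult_mat[of _ n n _ n _ n] mult_carrier_mat[of _ n n _ n])
  also have "\<dots> = A" using Wc A by simp
  finally show ?thesis .
qed

lemma unitary_conj_eigenvector_col:
  assumes W: "unitary_mat n W" and A: "A \<in> carrier_mat n n"
    and ev: "A *\<^sub>v col W 0 = e \<cdot>\<^sub>v col W 0" and i: "i < n"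
  shows "(cadj W * A * W) $$ (i, 0) = (if i = 0 then e else 0)"
proof -
  have Wc: "W \<in> carrier_mat n n" "cadj W * W = 1\<^sub>m n" using W by (auto simp: unitary_mat_def)
  have "(cadj W * A * W) $$ (i, 0) = row (cadj W) i \<bullet> col (A * W) 0"
    using Wc A i by (simp add: assoc_mult_mat[of _ n n _ n _ n])
  also have "col (A * W) 0 = e \<cdot>\<^sub>v col W 0" using Wc A i ev by simp
  also have "row (cadj W) i \<bullet> (e \<cdot>\<^sub>v col W 0) = e * (cadj W * W) $$ (i, 0)"
    using Wc(1) i by simp
  also have "(cadj W * W) $$ (i, 0) = 1\<^sub>m n $$ (i, 0)"
    by (simp only: Wc(2))
  finally show ?thesis using i by simp
qed

definition block_diag :: "'a :: zero \<Rightarrow> 'a mat \<Rightarrow> 'a mat" where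
  "block_diag c X = mat (Suc (dim_row X)) (Suc (dim_col X))
     (\<lambda>(i, j). if i = 0 \<and> j = 0 then c else if i = 0 \<or> j = 0 then 0 else X $$ (i - 1, j - 1))"

lemma block_diag_carrier [simp]: "X \<in> carrier_mat n m \<Longrightarrow> block_diag c X \<in> carrier_mat (Suc n) (Suc m)"
  by (auto simp: block_diag_def)

lemma block_diag_mult:
  fixes X Y :: "'a :: semiring_0 mat"
  assumes X: "X \<in> carrier_mat n k" and Y: "Y \<in> carrier_mat k m"
  shows "block_diag a X * block_diag b Y = block_diag (a * b) (X * Y)"
proof (rule eq_matI)
  fix i j assume "i < dim_row (block_diag (a * b) (X * Y))" "j < dim_col (block_diag (a * b) (X * Y))"
  then have ij: "i < Suc n" "j < Suc m" using X Y by (auto simp: block_diag_def)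
  have "(block_diag a X * block_diag b Y) $$ (i, j)
      = (\<Sum>l\<in>{0..<Suc k}. block_diag a X $$ (i, l) * block_diag b Y $$ (l, j))"
    using ij X Y by (simp add: scalar_prod_def block_diag_def)
  also have "\<dots> = block_diag a X $$ (i, 0) * block_diag b Y $$ (0, j)
      + (\<Sum>l\<in>{0..<k}. block_diag a X $$ (i, Suc l) * block_diag b Y $$ (Suc l, j))"
    by (subst sum.atLeast0_lessThan_Suc_shift) simp
  also have "\<dots> = block_diag (a * b) (X * Y) $$ (i, j)"
    using ij X Y by (cases i; cases j) (auto simp: block_diag_def scalar_prod_def)
  finally show "(block_diag a X * block_diag b Y) $$ (i, j) = block_diag (a * b) (X * Y) $$ (i, j)" .
qed (use X Y in \<open>auto simp: block_diag_def\<close>)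

lemma cadj_block_diag: "cadj (block_diag c X) = block_diag (cnj c) (cadj X)"
  by (rule eq_matI) (auto simp: block_diag_def cadj_def)

lemma block_diag_one: "block_diag 1 (1\<^sub>m n) = 1\<^sub>m (Suc n)"
  by (rule eq_matI) (auto simp: block_diag_def)

lemma block_diag_mat_diag: "block_diag c (mat_diag n f) = mat_diag (Suc n) (\<lambda>i. if i = 0 then c else f (i - 1))"
  by (rule eq_matI) (auto simp: block_diag_def mat_diag_def)

lemma unitary_mat_block_diag:
  assumes "unitary_mat n U"
  shows "unitary_mat (Suc n) (block_diag 1 U)"
proof (rule unitary_matI)
  have U: "U \<in> carrier_mat n n" "cadj U * U = 1\<^sub>m n" using assms by (auto simp: unitary_mat_def)
  then show "block_diag 1 U \<in> carrier_mat (Suc n) (Suc n)" by simp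
  show "cadj (block_diag 1 U) * block_diag 1 U = 1\<^sub>m (Suc n)"
    using U by (simp add: cadj_block_diag block_diag_mult[of _ n n _ n] block_diag_one)
qed

lemma hermitian_mat_block_diag_split:
  assumes B: "hermitian_mat (Suc n) B"
    and col0: "\<And>i. i < Suc n \<Longrightarrow> B $$ (i, 0) = (if i = 0 then e else 0)"
  obtains r :: real and B' where "hermitian_mat n B'" "B = block_diag (complex_of_real r) B'"
proof -
  define B' where "B' = mat n n (\<lambda>(i, j). B $$ (Suc i, Suc j))"
  have row0: "B $$ (0, j) = (if j = 0 then cnj e else 0)" if "j < Suc n" for j
    using hermitian_mat_cnj_index[OF B that, of 0] col0[OF that] by simp
  have e: "e = complex_of_real (Re e)"
    using row0[of 0] col0[of 0] by (simp add: complex_eq_iff)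
  have "cadj B' = B'"
  proof (rule eq_matI)
    fix i j assume "i < dim_row B'" "j < dim_col B'"
    then show "cadj B' $$ (i, j) = B' $$ (i, j)"
      using hermitian_mat_cnj_index[OF B, of "Suc j" "Suc i"] by (simp add: B'_def)
  qed (simp_all add: B'_def)
  then have "hermitian_mat n B'" by (simp add: hermitian_mat_def B'_def)
  moreover have "B = block_diag (complex_of_real (Re e)) B'"
  proof (rule eq_matI)
    fix i j assume "i < dim_row (block_diag (complex_of_real (Re e)) B')"
      "j < dim_col (block_diag (complex_of_real (Re e)) B')"
    then have "i < Suc n" "j < Suc n" by (simp_all add: block_diag_def B'_def)
    then show "B $$ (i, j) = block_diag (complex_of_real (Re e)) B' $$ (i, j)"
      using col0 row0 e by (cases i; cases j) (auto simp: block_diag_def B'_def)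
  qed (use B in \<open>auto simp: hermitian_mat_def block_diag_def B'_def\<close>)
  ultimately show ?thesis using that by blast
qed

theorem hermitian_mat_unitary_diagonalization:
  assumes "hermitian_mat n A"
  shows "\<exists>U d. unitary_mat n U \<and> A = U * mat_diag n (\<lambda>i. complex_of_real (d i)) * cadj U"
  using assms
proof (induction n arbitrary: A)
  case 0
  then show ?case
    by (intro exI[of _ "1\<^sub>m 0"]) (auto simp: unitary_mat_def hermitian_mat_def intro!: eq_matI)
next
  case (Suc n)
  have A: "A \<in> carrier_mat (Suc n) (Suc n)" using Suc.prems by (simp add: hermitian_mat_def)
  obtain e where "eigenvalue A e" using spectrum_non_empty[OF A] by (auto simp: spectrum_def)
  then obtain v where v: "v \<in> carrier_vec (Suc n)" "v \<noteq> 0\<^sub>v (Suc n)" "A *\<^sub>v v = e \<cdot>\<^sub>v v"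
    using A by (auto simp: eigenvalue_def eigenvector_def)
  obtain W s where W: "unitary_mat (Suc n) W" and s: "col W 0 = s \<cdot>\<^sub>v v"
    using unitary_completion[OF v(1,2)] by blast
  have Wc: "W \<in> carrier_mat (Suc n) (Suc n)" using W by (simp add: unitary_mat_def)
  have "A *\<^sub>v col W 0 = e \<cdot>\<^sub>v col W 0"
    using s v A by (simp add: mult_mat_vec smult_smult_assoc mult.commute)
  then obtain r B' where B': "hermitian_mat n B'" and split: "cadj W * A * W = block_diag (complex_of_real r) B'"
    using hermitian_mat_block_diag_split[OF hermitian_mat_cadj_mult_mult[OF Suc.prems Wc]]
      unitary_conj_eigenvector_col[OF W A] by metis
  obtain U' d' where U': "unitary_mat n U'"
    and B'_eq: "B' = U' * mat_diag n (\<lambda>i. complex_of_real (d' i)) * cadj U'"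
    using Suc.IH[OF B'] by blast
  have U'c: "U' \<in> carrier_mat n n" using U' by (simp add: unitary_mat_def)
  define U where "U = W * block_diag 1 U'"
  define d where "d i = (if i = 0 then r else d' (i - 1))" for i
  have diag: "block_diag (complex_of_real r) (mat_diag n (\<lambda>i. complex_of_real (d' i)))
      = mat_diag (Suc n) (\<lambda>i. complex_of_real (d i))"
    unfolding block_diag_mat_diag d_def by (rule arg_cong[where f = "mat_diag (Suc n)"]) auto
  have "A = W * (cadj W * A * W) * cadj W" using unitary_mat_conj_cancel[OF W A] by simp
  also have "cadj W * A * W
      = block_diag 1 U' * mat_diag (Suc n) (\<lambda>i. complex_of_real (d i)) * block_diag 1 (cadj U')"
    unfolding split B'_eq diag[symmetric] using U'c by (simp add: block_diag_mult[of _ n n _ n])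
  also have "W * \<dots> * cadj W = U * mat_diag (Suc n) (\<lambda>i. complex_of_real (d i)) * cadj U"
    using Wc U'c
    by (simp add: U_def cadj_mult[OF Wc block_diag_carrier[OF U'c]] cadj_block_diag
        assoc_mult_mat[of _ "Suc n" "Suc n" _ "Suc n" _ "Suc n"] mult_carrier_mat[of _ "Suc n" "Suc n" _ "Suc n"])
  finally show ?case using unitary_mat_mult[OF W unitary_mat_block_diag[OF U']] U_def by blast
qed

lemma unitary_mat_cadj: "unitary_mat n U \<Longrightarrow> unitary_mat n (cadj U)"
  by (auto simp: unitary_mat_def)

lemma similar_mult:
  fixes U V X Y :: "'a :: semiring_1 mat"
  assumes U: "U \<in> carrier_mat n n" and V: "V \<in> carrier_mat n n" and VU: "V * U = 1\<^sub>m n"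
    and X: "X \<in> carrier_mat n n" and Y: "Y \<in> carrier_mat n n"
  shows "U * X * V * (U * Y * V) = U * (X * Y) * V"
proof -
  have "U * X * V * (U * Y * V) = U * X * (V * U) * Y * V"
    using U V X Y by (simp add: assoc_mult_mat[of _ n n _ n _ n] mult_carrier_mat[of _ n n _ n])
  also have "\<dots> = U * X * Y * V"
    using U V X Y mult_carrier_mat[OF U X] by (simp add: VU)
  also have "\<dots> = U * (X * Y) * V"
    using U V X Y by (simp add: assoc_mult_mat[of _ n n _ n _ n])
  finally show ?thesis .
qed

lemma similar_minus:
  fixes U V X Y :: "'a :: ring mat"
  assumes U: "U \<in> carrier_mat n n" and V: "V \<in> carrier_mat n n"
    and X: "X \<in> carrier_mat n n" and Y: "Y \<in> carrier_mat n n"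
  shows "U * (X - Y) * V = U * X * V - U * Y * V"
proof -
  have "(U * X - U * Y) * V = U * X * V - U * Y * V"
    by (rule minus_mult_distrib_mat) (use U V X Y in auto)
  then show ?thesis by (simp add: mult_minus_distrib_mat[OF U X Y])
qed

lemma dim_mat_diag: "dim_row (mat_diag n f) = n" "dim_col (mat_diag n f) = n"
  by (simp_all add: mat_diag_def)

lemma index_mat_diag_mult:
  "B \<in> carrier_mat n m \<Longrightarrow> i < n \<Longrightarrow> j < m \<Longrightarrow> (mat_diag n f * B) $$ (i, j) = f i * B $$ (i, j)"
  by (simp add: mat_diag_mult_left)

lemma index_mult_mat_diag:
  "B \<in> carrier_mat m n \<Longrightarrow> i < m \<Longrightarrow> j < n \<Longrightarrow> (B * mat_diag n f) $$ (i, j) = B $$ (i, j) * f j"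
  by (simp add: mat_diag_mult_right)

lemma index_similar_mat_diag:
  assumes "U \<in> carrier_mat n n" "V \<in> carrier_mat n n" "i < n" "j < n"
  shows "(U * mat_diag n f * V) $$ (i, j) = (\<Sum>l<n. U $$ (i, l) * f l * V $$ (l, j))"
  using assms by (auto simp: mat_diag_mult_right scalar_prod_def atLeast0LessThan intro!: sum.cong)

lemma power_similar_mat_diag:
  assumes U: "U \<in> carrier_mat n n" and V: "V \<in> carrier_mat n n"
    and VU: "V * U = 1\<^sub>m n" and UV: "U * V = 1\<^sub>m n"
  shows "(U * mat_diag n f * V) ^\<^sub>m k = U * mat_diag n (\<lambda>i. f i ^ k) * V"
proof (induction k)
  case 0
  then show ?case using U V UV by simp
next
  case (Suc k)
  have "(\<lambda>i. f i ^ Suc k) = (\<lambda>i. f i ^ k * f i)" by (rule ext) (rule power_Suc2)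
  with Suc show ?case
    using similar_mult[OF U V VU mat_diag_dim mat_diag_dim, of "\<lambda>i. f i ^ k" f] by simp
qed

lemma dim_mexp [simp]: "dim_row (mexp A) = dim_row A" "dim_col (mexp A) = dim_col A"
  by (simp_all add: mexp_def)

lemma mexp_carrier [simp]: "A \<in> carrier_mat n n \<Longrightarrow> mexp A \<in> carrier_mat n n"
  by (simp add: mexp_def)

lemma exp_series_sums: "(\<lambda>k. z ^ k / of_nat (fact k)) sums exp (z :: complex)"
  using exp_converges[of z] by (simp add: scaleR_conv_of_real divide_inverse mult.commute)

lemma mexp_similar_mat_diag:
  assumes U: "U \<in> carrier_mat n n" and V: "V \<in> carrier_mat n n"
    and VU: "V * U = 1\<^sub>m n" and UV: "U * V = 1\<^sub>m n"
  shows "mexp (U * mat_diag n f * V) = U * mat_diag n (\<lambda>i. exp (f i)) * V"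
proof (rule eq_matI)
  fix i j assume "i < dim_row (U * mat_diag n (\<lambda>i. exp (f i)) * V)"
    "j < dim_col (U * mat_diag n (\<lambda>i. exp (f i)) * V)"
  then have ij: "i < n" "j < n" using U V by auto
  have "(\<lambda>k. \<Sum>l<n. U $$ (i, l) * V $$ (l, j) * (f l ^ k / of_nat (fact k)))
      sums (\<Sum>l<n. U $$ (i, l) * V $$ (l, j) * exp (f l))"
    by (intro sums_sum sums_mult exp_series_sums)
  then have "(\<lambda>k. ((U * mat_diag n f * V) ^\<^sub>m k) $$ (i, j) / of_nat (fact k))
      sums (U * mat_diag n (\<lambda>i. exp (f i)) * V) $$ (i, j)"
    by (simp add: power_similar_mat_diag[OF U V VU UV] index_similar_mat_diag[OF U V ij]
        sum_divide_distrib mult_ac)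
  then show "mexp (U * mat_diag n f * V) $$ (i, j) = (U * mat_diag n (\<lambda>i. exp (f i)) * V) $$ (i, j)"
    using U V ij by (simp add: mexp_def sums_iff)
qed (use U V in \<open>simp_all add: mexp_def\<close>)

lemma smult_similar_mat_diag:
  fixes U V :: "'a :: comm_semiring_1 mat"
  assumes U: "U \<in> carrier_mat n n" and V: "V \<in> carrier_mat n n"
  shows "c \<cdot>\<^sub>m (U * mat_diag n f * V) = U * mat_diag n (\<lambda>i. c * f i) * V"
proof (rule eq_matI)
  fix i j assume "i < dim_row (U * mat_diag n (\<lambda>i. c * f i) * V)"
    "j < dim_col (U * mat_diag n (\<lambda>i. c * f i) * V)"
  then have ij: "i < n" "j < n" using U V by auto
  then show "(c \<cdot>\<^sub>m (U * mat_diag n f * V)) $$ (i, j) = (U * mat_diag n (\<lambda>i. c * f i) * V) $$ (i, j)"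
    using U V by (simp add: index_similar_mat_diag[OF U V ij] sum_distrib_left mult_ac)
qed (use U V in auto)

lemma dim_comm [simp]: "dim_row (comm A B) = dim_row B" "dim_col (comm A B) = dim_col A"
  by (simp_all add: comm_def)

lemma comm_carrier [simp]: "A \<in> carrier_mat n n \<Longrightarrow> B \<in> carrier_mat n n \<Longrightarrow> comm A B \<in> carrier_mat n n"
  by (metis carrier_matD carrier_matI dim_comm)

lemma index_comm:
  "A \<in> carrier_mat n n \<Longrightarrow> B \<in> carrier_mat n n \<Longrightarrow> i < n \<Longrightarrow> j < n \<Longrightarrow>
    comm A B $$ (i, j) = (A * B) $$ (i, j) - (B * A) $$ (i, j)"
  unfolding comm_def by (rule index_minus_mat) auto

lemma comm_eq_0_iff:
  assumes "A \<in> carrier_mat n n" "B \<in> carrier_mat n n"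
  shows "comm A B = 0\<^sub>m n n \<longleftrightarrow> A * B = B * A"
  using assms by (auto simp: mat_eq_iff index_comm)

lemma similar_comm:
  assumes U: "U \<in> carrier_mat n n" and V: "V \<in> carrier_mat n n" and VU: "V * U = 1\<^sub>m n"
    and X: "X \<in> carrier_mat n n" and Y: "Y \<in> carrier_mat n n"
  shows "comm (U * X * V) (U * Y * V) = U * comm X Y * V"
  unfolding comm_def
  by (simp add: similar_mult[OF U V VU X Y] similar_mult[OF U V VU Y X] similar_minus[OF U V]
      mult_carrier_mat[OF X Y] mult_carrier_mat[OF Y X])

lemma index_comm_mat_diag:
  "H \<in> carrier_mat n n \<Longrightarrow> i < n \<Longrightarrow> j < n \<Longrightarrow>
    comm H (mat_diag n f) $$ (i, j) = H $$ (i, j) * (f j - f i)"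
  by (simp add: index_comm index_mult_mat_diag index_mat_diag_mult algebra_simps)

lemma comm_smult_one: "A \<in> carrier_mat n n \<Longrightarrow> comm A (c \<cdot>\<^sub>m 1\<^sub>m n) = 0\<^sub>m n n"
  by (auto simp: mat_eq_iff index_comm)

lemma comm_zero_right: "A \<in> carrier_mat n n \<Longrightarrow> comm A (0\<^sub>m n n) = 0\<^sub>m n n"
  by (auto simp: mat_eq_iff index_comm)

lemma laplacian_eq_comm:
  assumes "x \<in> carrier_mat n n" "y \<in> carrier_mat n n" "a \<in> carrier_mat n n"
  shows "laplacian x y a = comm y (comm y a) + comm x (comm x a)"
proof -
  have "- comm x (- comm x a) = comm x (comm x a)"
    using assms by (auto simp: mat_eq_iff index_comm)
  then show ?thesis by (simp add: laplacian_def delta1_def delta2_def)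
qed

lemma laplacian_smult_one:
  "x \<in> carrier_mat n n \<Longrightarrow> y \<in> carrier_mat n n \<Longrightarrow> laplacian x y (c \<cdot>\<^sub>m 1\<^sub>m n) = 0\<^sub>m n n"
  by (simp add: laplacian_eq_comm comm_smult_one comm_zero_right)

lemma commute_mat_diag_comp:
  fixes B :: "'a :: idom mat"
  assumes B: "B \<in> carrier_mat n n" and commute: "mat_diag n g * B = B * mat_diag n g"
  shows "mat_diag n (\<lambda>i. f (g i)) * B = B * mat_diag n (\<lambda>i. f (g i))"
proof (rule eq_matI)
  fix i j assume "i < dim_row (B * mat_diag n (\<lambda>i. f (g i)))" "j < dim_col (B * mat_diag n (\<lambda>i. f (g i)))"
  then have ij: "i < n" "j < n" using B by (auto simp: dim_mat_diag)
  have "g i * B $$ (i, j) = B $$ (i, j) * g j"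
    using arg_cong[OF commute, of "\<lambda>M. M $$ (i, j)"] B ij by (simp add: index_mat_diag_mult index_mult_mat_diag)
  then have "B $$ (i, j) = 0 \<or> g i = g j" by (auto simp: mult.commute)
  then show "(mat_diag n (\<lambda>i. f (g i)) * B) $$ (i, j) = (B * mat_diag n (\<lambda>i. f (g i))) $$ (i, j)"
    using B ij by (auto simp: index_mat_diag_mult index_mult_mat_diag)
qed (use B in \<open>auto simp: dim_mat_diag\<close>)

lemma commute_mexp_hermitian:
  assumes x: "hermitian_mat n x" and a: "a \<in> carrier_mat n n" and xa: "x * a = a * x"
  shows "a * mexp (c \<cdot>\<^sub>m x) = mexp (c \<cdot>\<^sub>m x) * a"
proof -
  obtain V d where V: "unitary_mat n V" and x_eq: "x = V * mat_diag n (\<lambda>i. complex_of_real (d i)) * cadj V"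
    using hermitian_mat_unitary_diagonalization[OF x] by blast
  have Vc: "V \<in> carrier_mat n n" "cadj V * V = 1\<^sub>m n" "V * cadj V = 1\<^sub>m n"
    using V by (auto simp: unitary_mat_def)
  let ?D = "mat_diag n (\<lambda>i. complex_of_real (d i))"
  let ?F = "mat_diag n (\<lambda>i. exp (c * complex_of_real (d i)))"
  define b where "b = cadj V * a * V"
  have b: "b \<in> carrier_mat n n" using Vc a by (simp add: b_def mult_carrier_mat[of _ n n _ n])
  have a_eq: "a = V * b * cadj V" using unitary_mat_conj_cancel[OF V a] by (simp add: b_def)
  note mult_conj = similar_mult[OF Vc(1) cadj_carrier[OF Vc(1)] Vc(2)]
  note cancel = unitary_mat_conj_cancel[OF unitary_mat_cadj[OF V], unfolded cadj_cadj]
  have "V * (?D * b) * cadj V = V * (b * ?D) * cadj V"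
    using xa by (simp add: x_eq a_eq mult_conj b)
  then have "cadj V * (V * (?D * b) * cadj V) * V = cadj V * (V * (b * ?D) * cadj V) * V"
    by simp
  then have "?D * b = b * ?D"
    by (simp only: cancel[OF mult_carrier_mat[OF mat_diag_dim b]] cancel[OF mult_carrier_mat[OF b mat_diag_dim]])
  then have Fb: "?F * b = b * ?F"
    using commute_mat_diag_comp[OF b, of "\<lambda>i. complex_of_real (d i)" "\<lambda>z. exp (c * z)"] by simp
  have "mexp (c \<cdot>\<^sub>m x) = V * ?F * cadj V"
    using Vc by (simp add: x_eq smult_similar_mat_diag mexp_similar_mat_diag)
  then show ?thesis by (simp add: a_eq mult_conj b Fb)
qed

lemma mtrace_mult_comm:
  "A \<in> carrier_mat n m \<Longrightarrow> B \<in> carrier_mat m n \<Longrightarrow> mtrace (A * B) = mtrace (B * A)"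
  unfolding mtrace_def
  by (simp add: scalar_prod_def atLeast0LessThan mult.commute, subst sum.swap, simp)

lemma mtrace_add: "A \<in> carrier_mat n n \<Longrightarrow> B \<in> carrier_mat n n \<Longrightarrow> mtrace (A + B) = mtrace A + mtrace B"
  by (simp add: mtrace_def sum.distrib)

lemma mtrace_similar:
  assumes U: "U \<in> carrier_mat n n" and V: "V \<in> carrier_mat n n" and VU: "V * U = 1\<^sub>m n"
    and X: "X \<in> carrier_mat n n"
  shows "mtrace (U * X * V) = mtrace X"
proof -
  have "mtrace (U * X * V) = mtrace (V * (U * X))"
    using U V X by (intro mtrace_mult_comm[of _ n n]) auto
  also have "V * (U * X) = X"
    using U V X by (simp add: VU flip: assoc_mult_mat[of V n n U n X n])
  finally show ?thesis .
qed

lemma index_double_comm_mat_diag: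
  assumes H: "H \<in> carrier_mat n n" and i: "i < n"
  shows "comm H (comm H (mat_diag n g)) $$ (i, i) = (\<Sum>j<n. 2 * H $$ (i, j) * H $$ (j, i) * (g i - g j))"
proof -
  let ?C = "comm H (mat_diag n g)"
  have C: "?C \<in> carrier_mat n n" using H by simp
  have "comm H ?C $$ (i, i) = (H * ?C) $$ (i, i) - (?C * H) $$ (i, i)"
    by (rule index_comm[OF H C i i])
  also have "\<dots> = (\<Sum>j<n. H $$ (i, j) * ?C $$ (j, i)) - (\<Sum>j<n. ?C $$ (i, j) * H $$ (j, i))"
    using H C i by (simp add: scalar_prod_def atLeast0LessThan dim_mat_diag)
  also have "\<dots> = (\<Sum>j<n. H $$ (i, j) * (H $$ (j, i) * (g i - g j)) - H $$ (i, j) * (g j - g i) * H $$ (j, i))"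
    using H i by (simp add: sum_subtractf index_comm_mat_diag)
  also have "\<dots> = (\<Sum>j<n. 2 * H $$ (i, j) * H $$ (j, i) * (g i - g j))"
    by (rule sum.cong) (simp_all add: algebra_simps)
  finally show ?thesis .
qed

lemma sum_symmetrize:
  fixes c :: "nat \<Rightarrow> nat \<Rightarrow> 'a :: comm_ring_1"
  assumes sym: "\<And>i j. i < n \<Longrightarrow> j < n \<Longrightarrow> c i j = c j i"
  shows "(\<Sum>i<n. f i * (\<Sum>j<n. 2 * c i j * (g i - g j)))
    = (\<Sum>i<n. \<Sum>j<n. c i j * (f i - f j) * (g i - g j))"
proof -
  define S where "S = (\<Sum>i<n. \<Sum>j<n. c i j * f i * (g i - g j))"
  have swap: "(\<Sum>i<n. \<Sum>j<n. c i j * f j * (g i - g j)) = - S"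
    unfolding S_def by (subst sum.swap) (auto simp: sum_negf[symmetric] algebra_simps sym intro!: sum.cong)
  have "(\<Sum>i<n. f i * (\<Sum>j<n. 2 * c i j * (g i - g j))) = 2 * S"
    unfolding S_def by (simp add: sum_distrib_left algebra_simps)
  moreover have "(\<Sum>i<n. \<Sum>j<n. c i j * (f i - f j) * (g i - g j))
      = S - (\<Sum>i<n. \<Sum>j<n. c i j * f j * (g i - g j))"
    unfolding S_def by (simp add: sum_subtractf[symmetric] algebra_simps)
  ultimately show ?thesis using swap by simp
qed

lemma mtrace_mat_diag_mult_double_comm:
  assumes H: "hermitian_mat n H"
  shows "mtrace (mat_diag n f * comm H (comm H (mat_diag n g)))
    = (\<Sum>i<n. \<Sum>j<n. complex_of_real ((cmod (H $$ (i, j)))\<^sup>2) * (f i - f j) * (g i - g j))"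
proof -
  have Hc: "H \<in> carrier_mat n n" using H by (simp add: hermitian_mat_def)
  define c where "c i j = complex_of_real ((cmod (H $$ (i, j)))\<^sup>2)" for i j
  have c: "H $$ (i, j) * H $$ (j, i) = c i j" if "i < n" "j < n" for i j
    using hermitian_mat_cnj_index[OF H that] by (simp add: c_def complex_norm_square del: of_real_power)
  have c_sym: "c i j = c j i" if "i < n" "j < n" for i j
    using hermitian_mat_cnj_index[OF H that] by (simp add: c_def)
  have M: "comm H (comm H (mat_diag n g)) \<in> carrier_mat n n" using Hc by simp
  have "mtrace (mat_diag n f * comm H (comm H (mat_diag n g)))
      = (\<Sum>i<n. f i * comm H (comm H (mat_diag n g)) $$ (i, i))"
    unfolding mtrace_def index_mult_mat(2) dim_mat_diag
    by (intro sum.cong refl index_mat_diag_mult[OF M]) auto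
  also have "\<dots> = (\<Sum>i<n. f i * (\<Sum>j<n. 2 * c i j * (g i - g j)))"
    using Hc by (simp add: index_double_comm_mat_diag c mult.assoc)
  also have "\<dots> = (\<Sum>i<n. \<Sum>j<n. c i j * (f i - f j) * (g i - g j))"
    by (rule sum_symmetrize) (rule c_sym)
  finally show ?thesis by (simp add: c_def)
qed

lemma exp_diff_mult_diff_nonneg: "0 \<le> (exp s - exp t) * (s - t :: real)"
  by (cases "s \<le> t") (auto intro: mult_nonpos_nonpos)

lemma exp_diff_mult_diff_pos: "s \<noteq> t \<Longrightarrow> 0 < (exp s - exp t) * (s - t :: real)"
  by (cases "s < t") (auto intro: mult_neg_neg)

lemma mtrace_mexp_double_comm_unitary_diag:
  assumes H: "hermitian_mat n H" and U: "unitary_mat n U"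
    and a: "a = U * mat_diag n (\<lambda>i. complex_of_real (d i)) * cadj U"
  shows "mtrace (mexp a * comm H (comm H a)) = complex_of_real
    (\<Sum>i<n. \<Sum>j<n. (cmod ((cadj U * H * U) $$ (i, j)))\<^sup>2 * (exp (d i) - exp (d j)) * (d i - d j))"
proof -
  have Uc: "U \<in> carrier_mat n n" "cadj U * U = 1\<^sub>m n" "U * cadj U = 1\<^sub>m n"
    using U by (auto simp: unitary_mat_def)
  have Hc: "H \<in> carrier_mat n n" using H by (simp add: hermitian_mat_def)
  define H' where "H' = cadj U * H * U"
  have H': "hermitian_mat n H'" unfolding H'_def by (rule hermitian_mat_cadj_mult_mult[OF H Uc(1)])
  then have H'c: "H' \<in> carrier_mat n n" by (simp add: hermitian_mat_def)
  let ?D = "mat_diag n (\<lambda>i. complex_of_real (d i))"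
  let ?E = "mat_diag n (\<lambda>i. exp (complex_of_real (d i)))"
  have H_eq: "H = U * H' * cadj U" using unitary_mat_conj_cancel[OF U Hc] by (simp add: H'_def)
  note U_inv = Uc(1) cadj_carrier[OF Uc(1)] Uc(2)
  have "mexp a * comm H (comm H a) = U * (?E * comm H' (comm H' ?D)) * cadj U"
    using H'c by (simp add: a H_eq mexp_similar_mat_diag[OF U_inv Uc(3)] similar_comm[OF U_inv] similar_mult[OF U_inv])
  moreover have "?E * comm H' (comm H' ?D) \<in> carrier_mat n n"
    using H'c by (simp add: mult_carrier_mat[of _ n n _ n])
  ultimately have "mtrace (mexp a * comm H (comm H a)) = mtrace (?E * comm H' (comm H' ?D))"
    by (simp add: mtrace_similar[OF U_inv])
  also have "\<dots> = (\<Sum>i<n. \<Sum>j<n. complex_of_real ((cmod (H' $$ (i, j)))\<^sup>2)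
      * (exp (complex_of_real (d i)) - exp (complex_of_real (d j))) * (complex_of_real (d i) - complex_of_real (d j)))"
    by (rule mtrace_mat_diag_mult_double_comm[OF H'])
  finally show ?thesis by (simp add: H'_def exp_of_real)
qed

lemma mtrace_mexp_double_comm_nonneg:
  assumes H: "hermitian_mat n H" and a: "hermitian_mat n a"
  shows "0 \<le> mtrace (mexp a * comm H (comm H a))"
proof -
  obtain U d where U: "unitary_mat n U" and a_eq: "a = U * mat_diag n (\<lambda>i. complex_of_real (d i)) * cadj U"
    using hermitian_mat_unitary_diagonalization[OF a] by blast
  show ?thesis
    unfolding mtrace_mexp_double_comm_unitary_diag[OF H U a_eq] less_eq_complex_def
    by (simp del: of_real_sum add: sum_nonneg mult.assoc exp_diff_mult_diff_nonneg)
qed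

lemma commute_if_mtrace_mexp_double_comm_eq_0:
  assumes H: "hermitian_mat n H" and a: "hermitian_mat n a"
    and trace_0: "mtrace (mexp a * comm H (comm H a)) = 0"
  shows "H * a = a * H"
proof -
  obtain U d where U: "unitary_mat n U" and a_eq: "a = U * mat_diag n (\<lambda>i. complex_of_real (d i)) * cadj U"
    using hermitian_mat_unitary_diagonalization[OF a] by blast
  have Uc: "U \<in> carrier_mat n n" "cadj U * U = 1\<^sub>m n"
    using U by (auto simp: unitary_mat_def)
  have Hc: "H \<in> carrier_mat n n" using H by (simp add: hermitian_mat_def)
  define H' where "H' = cadj U * H * U"
  have H'c: "H' \<in> carrier_mat n n" using Hc Uc by (simp add: H'_def mult_carrier_mat[of _ n n _ n])
  let ?D = "mat_diag n (\<lambda>i. complex_of_real (d i))"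
  let ?t = "\<lambda>i j. (cmod (H' $$ (i, j)))\<^sup>2 * ((exp (d i) - exp (d j)) * (d i - d j))"
  have t_nonneg: "0 \<le> ?t i j" for i j by (simp add: exp_diff_mult_diff_nonneg)
  have "(\<Sum>i<n. \<Sum>j<n. ?t i j) = 0"
    using trace_0 unfolding mtrace_mexp_double_comm_unitary_diag[OF H U a_eq]
    by (simp only: of_real_eq_0_iff H'_def mult.assoc)
  then have "?t i j = 0" if "i < n" "j < n" for i j
    using that t_nonneg by (simp add: sum_nonneg sum_nonneg_eq_0_iff)
  then have "H' $$ (i, j) * (complex_of_real (d j) - complex_of_real (d i)) = 0" if "i < n" "j < n" for i j
    using that exp_diff_mult_diff_pos[of "d i" "d j"] by fastforce
  then have comm_0: "comm H' ?D = 0\<^sub>m n n"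
    using H'c by (auto simp: mat_eq_iff index_comm_mat_diag dim_mat_diag)
  have H_eq: "H = U * H' * cadj U" using unitary_mat_conj_cancel[OF U Hc] by (simp add: H'_def)
  have "comm H a = U * comm H' ?D * cadj U"
    using H'c by (simp add: a_eq H_eq similar_comm[OF Uc(1) cadj_carrier[OF Uc(1)] Uc(2)])
  also have "\<dots> = 0\<^sub>m n n" using Uc by (simp add: comm_0)
  finally show ?thesis using Hc a by (simp add: comm_eq_0_iff hermitian_mat_def)
qed

lemma cis_root_power_inj:
  assumes cop: "coprime m n" and i: "i < n" and j: "j < n"
    and eq: "cis (2 * pi * real m / real n) ^ i = cis (2 * pi * real m / real n) ^ j"
  shows "i = j"
proof -
  define \<theta> where "\<theta> = 2 * pi * real m / real n"
  have le_imp_eq: "k = l" if kl: "k \<le> l" "l < n" and eq: "cis \<theta> ^ k = cis \<theta> ^ l" for k l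
  proof -
    obtain d where l: "l = k + d" using kl(1) le_iff_add by blast
    have "cis \<theta> ^ k = cis \<theta> ^ k * cis \<theta> ^ d" using eq unfolding l power_add .
    then have "cis \<theta> ^ d = 1" by (simp add: mult_cancel_left1)
    then have "cos (real d * \<theta>) = 1" by (metis DeMoivre cis.sel(1) one_complex.sel(1))
    then obtain z :: int where "real d * \<theta> = real_of_int z * 2 * pi" by (auto simp: cos_one_2pi_int)
    then have "real d * real m * (2 * pi) = real_of_int z * real n * (2 * pi)"
      using kl by (simp add: \<theta>_def field_simps)
    then have "real (d * m) = real_of_int z * real n" using pi_gt_zero by simp
    then have "int (d * m) = z * int n" by (metis of_int_eq_iff of_int_mult of_int_of_nat_eq)
    then have "n dvd d * m" by (metis dvd_triv_right int_dvd_int_iff)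
    then have "n dvd d" using cop by (simp add: coprime_commute coprime_dvd_mult_left_iff)
    then show "k = l" using kl l by (auto dest: dvd_imp_le)
  qed
  show ?thesis using le_imp_eq[of i j] le_imp_eq[of j i] i j eq by (cases "i \<le> j") (auto simp: \<theta>_def)
qed

lemma clock_mat_eq_mat_diag: "clock_mat n m = mat_diag n (\<lambda>i. cis (2 * pi * real m / real n) ^ i)"
  by (rule eq_matI) (auto simp: clock_mat_def mat_diag_def)

lemma index_shift_mat_mult:
  assumes a: "a \<in> carrier_mat n n" and i: "i < n" and j: "j < n"
  shows "(shift_mat n * a) $$ (i, j) = a $$ ((i + 1) mod n, j)"
proof -
  have "(shift_mat n * a) $$ (i, j) = (\<Sum>k<n. (if k = (i + 1) mod n then 1 else 0) * a $$ (k, j))"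
    using a i j by (simp add: shift_mat_def scalar_prod_def atLeast0LessThan)
  also have "\<dots> = (\<Sum>k<n. if k = (i + 1) mod n then a $$ (k, j) else 0)"
    by (rule sum.cong) auto
  finally show ?thesis using i by simp
qed

lemma index_mult_shift_mat:
  assumes a: "a \<in> carrier_mat n n" and i: "i < n"
  shows "(a * shift_mat n) $$ (i, (i + 1) mod n) = a $$ (i, i)"
proof -
  have "(a * shift_mat n) $$ (i, (i + 1) mod n)
      = (\<Sum>k<n. a $$ (i, k) * (if (i + 1) mod n = (k + 1) mod n then 1 else 0))"
    using a i by (simp add: shift_mat_def scalar_prod_def atLeast0LessThan)
  also have "\<dots> = (\<Sum>k<n. if k = i then a $$ (i, k) else 0)"
  proof (rule sum.cong)
    fix k assume "k \<in> {..<n}"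
    then have "(k + 1) mod n = (i + 1) mod n \<longleftrightarrow> k = i"
      using i by (metis Suc_eq_plus1 Suc_lessI lessThan_iff mod_Suc mod_less nat.inject old.nat.distinct(1))
    then show "a $$ (i, k) * (if (i + 1) mod n = (k + 1) mod n then 1 else 0) = (if k = i then a $$ (i, k) else 0)"
      by auto
  qed simp
  finally show ?thesis using i by simp
qed

lemma commute_clock_shift_imp_scalar:
  assumes cop: "coprime m n" and a: "a \<in> carrier_mat n n"
    and clock: "a * clock_mat n m = clock_mat n m * a" and shift: "a * shift_mat n = shift_mat n * a"
  shows "a = a $$ (0, 0) \<cdot>\<^sub>m 1\<^sub>m n"
proof -
  define q where "q = cis (2 * pi * real m / real n)"
  have off_diag: "a $$ (i, j) = 0" if ij: "i < n" "j < n" "i \<noteq> j" for i j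
  proof -
    have "a $$ (i, j) * q ^ j = q ^ i * a $$ (i, j)"
      using arg_cong[OF clock, of "\<lambda>M. M $$ (i, j)"] a ij
      by (simp add: clock_mat_eq_mat_diag q_def index_mat_diag_mult index_mult_mat_diag)
    moreover have "q ^ i \<noteq> q ^ j" using cis_root_power_inj[OF cop ij(1,2)] ij(3) unfolding q_def by blast
    ultimately show ?thesis by (auto simp: mult.commute)
  qed
  have diag_step: "a $$ (i, i) = a $$ ((i + 1) mod n, (i + 1) mod n)" if i: "i < n" for i
  proof -
    have "(i + 1) mod n < n" using i by simp
    then show ?thesis
      using arg_cong[OF shift, of "\<lambda>M. M $$ (i, (i + 1) mod n)"]
        index_mult_shift_mat[OF a i] index_shift_mat_mult[OF a i] by simp
  qed
  have diag: "a $$ (i, i) = a $$ (0, 0)" if "i < n" for i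
    using that
  proof (induction i)
    case (Suc i)
    then show ?case using diag_step[of i] by simp
  qed simp
  show ?thesis
  proof (rule eq_matI)
    fix i j assume "i < dim_row (a $$ (0, 0) \<cdot>\<^sub>m 1\<^sub>m n)" "j < dim_col (a $$ (0, 0) \<cdot>\<^sub>m 1\<^sub>m n)"
    then have "i < n" "j < n" by auto
    then show "a $$ (i, j) = (a $$ (0, 0) \<cdot>\<^sub>m 1\<^sub>m n) $$ (i, j)"
      using off_diag diag[of i] by (cases "i = j") auto
  qed (use a in auto)
qed

lemma mtrace_mexp_laplacian:
  assumes "x \<in> carrier_mat n n" "y \<in> carrier_mat n n" "a \<in> carrier_mat n n"
  shows "mtrace (mexp a * laplacian x y a)
    = mtrace (mexp a * comm y (comm y a)) + mtrace (mexp a * comm x (comm x a))"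
  using assms
  by (simp add: laplacian_eq_comm mult_add_distrib_mat[of "mexp a" n n _ n] mtrace_add[of _ n]
      mult_carrier_mat[of _ n n _ n])

theorem proposition3p1:
  fixes n m :: nat and x y a :: "complex mat"
  assumes "n \<ge> 2" and "1 \<le> m" and "m \<le> n - 1" and "coprime m n"
    and "hermitian_mat n x" and "hermitian_mat n y"
    and "clock_mat n m = mexp ((complex_of_real (2 * pi / real n) * \<i>) \<cdot>\<^sub>m x)"
    and "shift_mat n = mexp ((complex_of_real (2 * pi / real n) * \<i>) \<cdot>\<^sub>m y)"
    and "hermitian_mat n a"
  shows "0 \<le> mtrace (mexp a * laplacian x y a)
    \<and> (mtrace (mexp a * laplacian x y a) = 0 \<longleftrightarrow> (\<exists>c::complex. a = c \<cdot>\<^sub>m 1\<^sub>m n))"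
proof -
  have x: "x \<in> carrier_mat n n" and y: "y \<in> carrier_mat n n" and a: "a \<in> carrier_mat n n"
    using assms(5,6,9) by (simp_all add: hermitian_mat_def)
  define T where "T h = mtrace (mexp a * comm h (comm h a))" for h
  have trace_eq: "mtrace (mexp a * laplacian x y a) = T y + T x"
    using mtrace_mexp_laplacian[OF x y a] by (simp add: T_def)
  have T_nonneg: "0 \<le> T x" "0 \<le> T y"
    using mtrace_mexp_double_comm_nonneg assms(5,6,9) by (simp_all add: T_def)
  have "a = a $$ (0, 0) \<cdot>\<^sub>m 1\<^sub>m n" if "T y + T x = 0"
  proof -
    have "T x = 0" "T y = 0" using that T_nonneg by (simp_all add: add_nonneg_eq_0_iff)
    then have "x * a = a * x" "y * a = a * y"
      using commute_if_mtrace_mexp_double_comm_eq_0 assms(5,6,9) by (simp_all add: T_def)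
    then have "a * clock_mat n m = clock_mat n m * a" "a * shift_mat n = shift_mat n * a"
      unfolding assms(7,8) using commute_mexp_hermitian assms(5,6) a by simp_all
    then show ?thesis using commute_clock_shift_imp_scalar[OF assms(4) a] by simp
  qed
  moreover have "T y + T x = 0" if "a = c \<cdot>\<^sub>m 1\<^sub>m n" for c
    using trace_eq right_mult_zero_mat[OF mexp_carrier[OF a]] x y
    by (simp add: that laplacian_smult_one mtrace_def)
  ultimately show ?thesis using trace_eq T_nonneg by (auto intro: add_nonneg_nonneg)
qed

end
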